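(* Consider the planar system $$\frac{dN}{dt}=rN\left(1-\frac{N}{K}-\frac{h}{w+N}\right)-\frac{aNP}{b+N^2},\qquad \frac{dP}{dt}=\frac{cNP}{b+N^2}-\delta P,$$ where $r,K,h,w,a,b,c,\delta$ are positive constants. Suppose $K>w$ and the Allee effect is strong, i.e. $h>w$. Let $$N_{1}=\frac{(K-w)+\sqrt{(K-w)^2-4K(h-w)}}{2},\quad N_{2}=\frac{(K-w)-\sqrt{(K-w)^2-4K(h-w)}}{2},\quad N_3=\frac{K-w}{2},$$ and $E_n=(N_n,0)$ for $n=1,2,3$ (whenever these are equilibria). (i) If $h=\frac{(K+w)^2}{4K}$ and $c<\frac{\delta(b+N_3^2)}{N_3}$, then the axial equilibrium point $E_3$ is non-hyperbolic. (ii) If $h<\frac{(K+w)^2}{4K}$, and $c<\frac{\delta(b+N_n^2)}{N_n}$ for $n=1,2$, then the axial equilibrium point $E_1$ is locally asymptotically stable and the axial equilibrium point $E_2$ is unstable (a saddle).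
   Context: $N(t)$ is the prey density and $P(t)$ the predator density. An equilibrium is non-hyperbolic if the Jacobian matrix of the system at it has an eigenvalue with zero real part. *)

theory Defs
  imports "HOL-Analysis.Analysis"
begin

definition pp_field ::
  "real \<Rightarrow> real \<Rightarrow> real \<Rightarrow> real \<Rightarrow> real \<Rightarrow> real \<Rightarrow> real \<Rightarrow> real
   \<Rightarrow> real \<times> real \<Rightarrow> real \<times> real" where
  "pp_field r K h w a b c \<delta> z =
     (let N = fst z; P = snd z in
      (r * N * (1 - N / K - h / (w + N)) - a * N * P / (b + N^2),
       c * N * P / (b + N^2) - \<delta> * P))"

definition equilibrium :: "(real \<times> real \<Rightarrow> real \<times> real) \<Rightarrow> real \<times> real \<Rightarrow> bool" where
  "equilibrium F e \<longleftrightarrow> F e = 0"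

definition jac11 :: "(real \<times> real \<Rightarrow> real \<times> real) \<Rightarrow> real \<times> real \<Rightarrow> real" where
  "jac11 F e = deriv (\<lambda>n. fst (F (n, snd e))) (fst e)"
definition jac12 :: "(real \<times> real \<Rightarrow> real \<times> real) \<Rightarrow> real \<times> real \<Rightarrow> real" where
  "jac12 F e = deriv (\<lambda>p. fst (F (fst e, p))) (snd e)"
definition jac21 :: "(real \<times> real \<Rightarrow> real \<times> real) \<Rightarrow> real \<times> real \<Rightarrow> real" where
  "jac21 F e = deriv (\<lambda>n. snd (F (n, snd e))) (fst e)"
definition jac22 :: "(real \<times> real \<Rightarrow> real \<times> real) \<Rightarrow> real \<times> real \<Rightarrow> real" where
  "jac22 F e = deriv (\<lambda>p. snd (F (fst e, p))) (snd e)"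

definition jac_eigenvalue :: "(real \<times> real \<Rightarrow> real \<times> real) \<Rightarrow> real \<times> real \<Rightarrow> complex \<Rightarrow> bool" where
  "jac_eigenvalue F e l \<longleftrightarrow>
     (of_real (jac11 F e) - l) * (of_real (jac22 F e) - l)
       - of_real (jac12 F e) * of_real (jac21 F e) = 0"

definition non_hyperbolic :: "(real \<times> real \<Rightarrow> real \<times> real) \<Rightarrow> real \<times> real \<Rightarrow> bool" where
  "non_hyperbolic F e \<longleftrightarrow> equilibrium F e \<and> (\<exists>l. jac_eigenvalue F e l \<and> Re l = 0)"

definition saddle :: "(real \<times> real \<Rightarrow> real \<times> real) \<Rightarrow> real \<times> real \<Rightarrow> bool" where
  "saddle F e \<longleftrightarrow> equilibrium F e \<and>
     (\<exists>l1 l2 :: real. l1 < 0 \<and> 0 < l2 \<and>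
        jac_eigenvalue F e (of_real l1) \<and> jac_eigenvalue F e (of_real l2))"

definition forward_solution :: "(real \<times> real \<Rightarrow> real \<times> real) \<Rightarrow> (real \<Rightarrow> real \<times> real) \<Rightarrow> bool" where
  "forward_solution F x \<longleftrightarrow>
     (\<forall>t\<ge>0. (x has_vector_derivative F (x t)) (at t within {0..}))"

definition lyapunov_stable :: "(real \<times> real \<Rightarrow> real \<times> real) \<Rightarrow> real \<times> real \<Rightarrow> bool" where
  "lyapunov_stable F e \<longleftrightarrow>
     (\<forall>\<epsilon>>0. \<exists>\<delta>>0. \<forall>x. forward_solution F x \<and> dist (x 0) e < \<delta> \<longrightarrow>
        (\<forall>t\<ge>0. dist (x t) e < \<epsilon>))"

definition locally_attractive :: "(real \<times> real \<Rightarrow> real \<times> real) \<Rightarrow> real \<times> real \<Rightarrow> bool" where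
  "locally_attractive F e \<longleftrightarrow>
     (\<exists>\<eta>>0. \<forall>x. forward_solution F x \<and> dist (x 0) e < \<eta> \<longrightarrow> (x \<longlongrightarrow> e) at_top)"

definition locally_asymptotically_stable :: "(real \<times> real \<Rightarrow> real \<times> real) \<Rightarrow> real \<times> real \<Rightarrow> bool" where
  "locally_asymptotically_stable F e \<longleftrightarrow>
     equilibrium F e \<and> lyapunov_stable F e \<and> locally_attractive F e"

definition unstable :: "(real \<times> real \<Rightarrow> real \<times> real) \<Rightarrow> real \<times> real \<Rightarrow> bool" where
  "unstable F e \<longleftrightarrow> equilibrium F e \<and> \<not> lyapunov_stable F e"

end

(* Along the prey axis P = 0 the system decouples: the Jacobian at (N, 0) is upper triangular, with
   eigenvalues g'(N) for the prey growth g(N) = r N (1 - N/K - h/(w + N)), and c N/(b + N^2) - delta,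
   which the hypothesis on c makes negative. Writing g(N) = r N (N1 - N)(N - N2)/(K (w + N)) with the
   roots N1, N2 of N^2 - (K - w) N + K (h - w) gives g'(N1) = r N1 (N2 - N1)/(K (w + N1)).
   For h = (K + w)^2/(4K) the roots coincide at N3, so g'(N3) = 0 and E3 is non-hyperbolic. For smaller h, g'(N1) < 0 < g'(N2). Stability of E1 comes
   from the Lyapunov function (N - N1)^2 + beta P^2, which for large beta decays exponentially along
   solutions near E1. Instability of E2 is witnessed by prey-only solutions: inverting the time map
   T(N) = integral of dN/g(N), which diverges at N1, gives solutions that start arbitrarily close to N2
   and still reach (N1 + N2)/2. *)

theory Submission
  imports Defs "HOL-Real_Asymp.Real_Asymp"
begin

lemma allee_growth_factor:
  fixes K h w N N1 N2 :: real
  assumes "N1 + N2 = K - w" "N1 * N2 = K * (h - w)" "K \<noteq> 0" "w + N \<noteq> 0"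
  shows "1 - N / K - h / (w + N) = (N1 - N) * (N - N2) / (K * (w + N))"
proof -
  have "1 - N / K - h / (w + N) = ((K - N) * (w + N) - K * h) / (K * (w + N))"
    using assms(3,4) by (simp add: field_simps)
  also have "(K - N) * (w + N) - K * h = (N1 - N) * (N - N2)"
    using assms(1,2) by algebra
  finally show ?thesis .
qed

lemma pp_field_Pair:
  "pp_field r K h w a b c \<delta> (N, P) =
     (r * N * (1 - N / K - h / (w + N)) - a * N * P / (b + N^2), c * N * P / (b + N^2) - \<delta> * P)"
  by (simp add: pp_field_def)

lemma equilibrium_pp_field_axis_iff:
  "equilibrium (pp_field r K h w a b c \<delta>) (N, 0) \<longleftrightarrow> r * N * (1 - N / K - h / (w + N)) = 0"
  by (simp add: equilibrium_def pp_field_Pair zero_prod_def)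

lemma equilibrium_pp_field_root:
  fixes N1 N2 :: real
  assumes "N1 + N2 = K - w" "N1 * N2 = K * (h - w)" "K \<noteq> 0" "w + N1 \<noteq> 0"
  shows "equilibrium (pp_field r K h w a b c \<delta>) (N1, 0)"
  unfolding equilibrium_pp_field_axis_iff allee_growth_factor[OF assms] by simp

lemma jac_eigenvalue_triangular_iff:
  assumes "jac21 F e = 0"
  shows "jac_eigenvalue F e l \<longleftrightarrow> l = of_real (jac11 F e) \<or> l = of_real (jac22 F e)"
  using assms by (auto simp: jac_eigenvalue_def)

lemma saddle_triangularI:
  assumes "equilibrium F e" "jac21 F e = 0" "jac22 F e < 0" "0 < jac11 F e"
  shows "saddle F e"
  unfolding saddle_def using assms
  by (intro conjI exI[of _ "jac22 F e"] exI[of _ "jac11 F e"]) (auto simp: jac_eigenvalue_triangular_iff)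

lemma jac21_pp_field_axis: "jac21 (pp_field r K h w a b c \<delta>) (N, 0) = 0"
  by (simp add: jac21_def pp_field_Pair)

lemma jac22_pp_field_axis: "jac22 (pp_field r K h w a b c \<delta>) (N, 0) = c * N / (b + N^2) - \<delta>"
proof -
  define k where "k = c * N / (b + N^2)"
  have "((\<lambda>P. k * P - \<delta> * P) has_real_derivative k - \<delta>) (at 0)"
    by (auto intro!: derivative_eq_intros)
  then show ?thesis
    by (simp add: jac22_def pp_field_Pair k_def DERIV_imp_deriv)
qed

lemma jac11_pp_field_axis:
  assumes "K \<noteq> 0" "w + N \<noteq> 0"
  shows "jac11 (pp_field r K h w a b c \<delta>) (N, 0)
           = r * (1 - N / K - h / (w + N)) + r * N * (h / (w + N)^2 - 1 / K)"
proof -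
  have "((\<lambda>n. 1 - n / K - h / (w + n)) has_real_derivative h / (w + N)^2 - 1 / K) (at N)"
    using assms by (auto intro!: derivative_eq_intros simp: power2_eq_square)
  from DERIV_mult[OF DERIV_cmult_Id[of r] this]
  have "((\<lambda>n. r * n * (1 - n / K - h / (w + n))) has_real_derivative
          r * (1 - N / K - h / (w + N)) + r * N * (h / (w + N)^2 - 1 / K)) (at N)"
    by (simp add: ac_simps)
  then show ?thesis
    by (simp add: jac11_def pp_field_Pair DERIV_imp_deriv)
qed

lemma jac11_pp_field_root:
  fixes N1 N2 :: real
  assumes "N1 + N2 = K - w" "N1 * N2 = K * (h - w)" "K \<noteq> 0" "w + N1 \<noteq> 0"
  shows "jac11 (pp_field r K h w a b c \<delta>) (N1, 0) = r * N1 * (N2 - N1) / (K * (w + N1))"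
proof -
  have growth: "1 - N1 / K - h / (w + N1) = 0"
    using allee_growth_factor[OF assms] by simp
  have Kh: "K * h = (K - N1) * (w + N1)"
    using assms(1,2) by algebra
  have "h / (w + N1)^2 = K * h / (K * (w + N1)^2)"
    using assms(3) by simp
  also have "\<dots> = (K - N1) / (K * (w + N1))"
    unfolding Kh using assms(4) by (simp add: power2_eq_square)
  finally have "h / (w + N1)^2 - 1 / K = (K - N1) / (K * (w + N1)) - 1 / K" by simp
  also have "\<dots> = (N2 - N1) / (K * (w + N1))"
  proof -
    have "N2 = K - w - N1"
      using assms(1) by simp
    then show ?thesis
      using assms(3,4) by (simp add: divide_simps)
  qed
  finally show ?thesis
    using assms(3,4) by (simp add: jac11_pp_field_axis growth)
qed

lemma predator_growth_rate_neg:
  fixes N b c \<delta> :: real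
  assumes "0 < N" "0 < b" "c < \<delta> * (b + N^2) / N"
  shows "c * N / (b + N^2) - \<delta> < 0"
proof -
  have "0 < b + N^2" using assms(2) by (simp add: add_pos_nonneg)
  with assms show ?thesis by (simp add: field_simps)
qed

lemma exp_decay_while_below:
  fixes W W' :: "real \<Rightarrow> real" and R \<kappa> t :: real
  assumes cont: "continuous_on {0..} W"
    and deriv: "\<And>s. 0 < s \<Longrightarrow> (W has_real_derivative W' s) (at s)"
    and decay: "\<And>s. 0 < s \<Longrightarrow> W s < R \<Longrightarrow> W' s \<le> - \<kappa> * W s"
    and "0 \<le> \<kappa>" "0 \<le> W 0" "W 0 < R" "0 \<le> t"
  shows "W t \<le> W 0 * exp (- \<kappa> * t)"
proof -
  define H where "H s = W s * exp (\<kappa> * s)" for s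
  have H_le: "H s \<le> H 0" if "0 \<le> s" and below: "\<And>u. 0 < u \<Longrightarrow> u < s \<Longrightarrow> W u < R" for s
  proof (rule DERIV_nonpos_imp_decreasing_open[OF \<open>0 \<le> s\<close>])
    fix u assume u: "0 < u" "u < s"
    have "(H has_real_derivative (W' u + \<kappa> * W u) * exp (\<kappa> * u)) (at u)"
      unfolding H_def using deriv[OF u(1)]
      by (auto intro!: derivative_eq_intros simp: algebra_simps)
    moreover have "(W' u + \<kappa> * W u) * exp (\<kappa> * u) \<le> 0"
      using decay[OF u(1) below[OF u]] by (simp add: mult_nonpos_nonneg)
    ultimately show "\<exists>y. (H has_real_derivative y) (at u) \<and> y \<le> 0"
      by blast
  next
    show "continuous_on {0..s} H"
      unfolding H_def by (intro continuous_intros continuous_on_subset[OF cont]) auto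
  qed
  have below: "W s < R" if "0 \<le> s" for s
  proof (rule ccontr)
    assume "\<not> W s < R"
    define S where "S = {0..} \<inter> W -` {R..}"
    have "s \<in> S" "bdd_below S"
      unfolding S_def using \<open>0 \<le> s\<close> \<open>\<not> W s < R\<close> by auto
    moreover have "closed S"
      unfolding S_def by (rule continuous_closed_preimage[OF cont]) auto
    ultimately have first: "Inf S \<in> S"
      using closed_contains_Inf by blast
    have "H (Inf S) \<le> H 0"
    proof (rule H_le)
      show "0 \<le> Inf S" using first unfolding S_def by simp
      show "W u < R" if "0 < u" "u < Inf S" for u
        using that cInf_lower[OF _ \<open>bdd_below S\<close>, of u] unfolding S_def by force
    qed
    moreover have "W (Inf S) \<le> H (Inf S)"
      using first \<open>W 0 < R\<close> \<open>0 \<le> W 0\<close> \<open>0 \<le> \<kappa>\<close> unfolding S_def H_def by simp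
    ultimately show False
      using first \<open>W 0 < R\<close> unfolding S_def H_def by simp
  qed
  have "W t * exp (\<kappa> * t) \<le> W 0"
    using H_le[OF \<open>0 \<le> t\<close>] below by (simp add: H_def)
  then show ?thesis
    by (simp add: exp_minus field_simps)
qed

lemma forward_solution_continuous_on:
  "forward_solution F x \<Longrightarrow> continuous_on {0..} x"
  unfolding forward_solution_def
  by (metis atLeast_iff continuous_on_eq_continuous_within has_vector_derivative_continuous)

lemma forward_solution_has_vector_derivative_at:
  assumes "forward_solution F x" "0 < t"
  shows "(x has_vector_derivative F (x t)) (at t)"
proof -
  have "(x has_vector_derivative F (x t)) (at t within {0..})"
    using assms unfolding forward_solution_def by simp
  then have "(x has_vector_derivative F (x t)) (at t within {0<..})"
    by (rule has_vector_derivative_within_subset) auto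
  then show ?thesis
    using at_within_open[of t "{0<..}"] assms(2) by simp
qed

lemma has_vector_derivative_fst_snd:
  assumes "(x has_vector_derivative D) F"
  shows "((\<lambda>t. fst (x t)) has_real_derivative fst D) F"
    and "((\<lambda>t. snd (x t)) has_real_derivative snd D) F"
  using has_derivative_fst[OF assms[unfolded has_vector_derivative_def]]
    has_derivative_snd[OF assms[unfolded has_vector_derivative_def]]
  by (simp_all add: has_field_derivative_def mult_commute_abs)

definition quad_lyapunov :: "real \<Rightarrow> real \<times> real \<Rightarrow> real \<times> real \<Rightarrow> real" where
  "quad_lyapunov \<beta> e z = (fst z - fst e)^2 + \<beta> * (snd z - snd e)^2"

lemma quad_lyapunov_decay_along_solution:
  fixes F :: "real \<times> real \<Rightarrow> real \<times> real"
  assumes sol: "forward_solution F x" and "0 \<le> \<beta>" "0 \<le> \<kappa>"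
    and decay: "\<And>z. quad_lyapunov \<beta> e z < R \<Longrightarrow>
       2 * (fst z - fst e) * fst (F z) + 2 * \<beta> * (snd z - snd e) * snd (F z)
         \<le> - \<kappa> * quad_lyapunov \<beta> e z"
    and "quad_lyapunov \<beta> e (x 0) < R" "0 \<le> t"
  shows "quad_lyapunov \<beta> e (x t) \<le> quad_lyapunov \<beta> e (x 0) * exp (- \<kappa> * t)"
proof (rule exp_decay_while_below[where W = "\<lambda>t. quad_lyapunov \<beta> e (x t)"])
  show "continuous_on {0..} (\<lambda>t. quad_lyapunov \<beta> e (x t))"
    unfolding quad_lyapunov_def
    by (intro continuous_intros forward_solution_continuous_on[OF sol])
  fix s :: real assume "0 < s"
  from has_vector_derivative_fst_snd[OF forward_solution_has_vector_derivative_at[OF sol this]]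
  show "((\<lambda>t. quad_lyapunov \<beta> e (x t)) has_real_derivative
          2 * (fst (x s) - fst e) * fst (F (x s)) + 2 * \<beta> * (snd (x s) - snd e) * snd (F (x s))) (at s)"
    unfolding quad_lyapunov_def by (auto intro!: derivative_eq_intros)
qed (use assms in \<open>auto simp: quad_lyapunov_def\<close>)

lemma dist_le_quad_lyapunov:
  assumes "1 \<le> \<beta>"
  shows "(dist z e)^2 \<le> quad_lyapunov \<beta> e z" and "quad_lyapunov \<beta> e z \<le> \<beta> * (dist z e)^2"
proof -
  have dist2: "(dist z e)^2 = (fst z - fst e)^2 + (snd z - snd e)^2"
    by (simp add: dist_prod_def dist_real_def)
  have "(snd z - snd e)^2 \<le> \<beta> * (snd z - snd e)^2" "(fst z - fst e)^2 \<le> \<beta> * (fst z - fst e)^2"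
    using assms by (simp_all add: mult_le_cancel_right1)
  then show "(dist z e)^2 \<le> quad_lyapunov \<beta> e z" "quad_lyapunov \<beta> e z \<le> \<beta> * (dist z e)^2"
    unfolding dist2 quad_lyapunov_def by (simp_all add: algebra_simps)
qed

lemma quad_lyapunov_locally_asymptotically_stable:
  fixes F :: "real \<times> real \<Rightarrow> real \<times> real"
  assumes "equilibrium F e" "1 \<le> \<beta>" "0 < \<kappa>" "0 < R"
    and decay: "\<And>z. quad_lyapunov \<beta> e z < R \<Longrightarrow>
       2 * (fst z - fst e) * fst (F z) + 2 * \<beta> * (snd z - snd e) * snd (F z)
         \<le> - \<kappa> * quad_lyapunov \<beta> e z"
  shows "locally_asymptotically_stable F e"
proof -
  define \<eta> where "\<eta> = sqrt (R / \<beta>)"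
  have "0 < \<eta>"
    unfolding \<eta>_def using assms by simp
  have estimate: "dist (x t) e \<le> sqrt \<beta> * dist (x 0) e * exp (- \<kappa> * t / 2)"
    if "forward_solution F x" "dist (x 0) e < \<eta>" "0 \<le> t" for x t
  proof -
    have "\<beta> * (dist (x 0) e)^2 < \<beta> * \<eta>^2"
      using that(2) assms(2) by (simp add: power_strict_mono)
    also have "\<beta> * \<eta>^2 = R"
      unfolding \<eta>_def using assms(2,4) by simp
    finally have V0: "quad_lyapunov \<beta> e (x 0) < R"
      using dist_le_quad_lyapunov(2)[OF assms(2), of e "x 0"] by linarith
    have "(dist (x t) e)^2 \<le> quad_lyapunov \<beta> e (x t)"
      by (rule dist_le_quad_lyapunov(1)[OF assms(2)])
    also have "\<dots> \<le> quad_lyapunov \<beta> e (x 0) * exp (- \<kappa> * t)"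
      using quad_lyapunov_decay_along_solution[OF that(1) _ _ decay V0 that(3)] assms(2,3)
      by simp
    also have "\<dots> \<le> \<beta> * (dist (x 0) e)^2 * exp (- \<kappa> * t)"
      by (rule mult_right_mono[OF dist_le_quad_lyapunov(2)[OF assms(2)]]) simp
    also have "\<dots> = (sqrt \<beta> * dist (x 0) e * exp (- \<kappa> * t / 2))^2"
      using assms(2) by (simp add: power_mult_distrib exp_double[symmetric])
    finally show ?thesis
      by (rule power2_le_imp_le) (use assms(2) in simp)
  qed
  have "lyapunov_stable F e"
    unfolding lyapunov_stable_def
  proof (intro allI impI)
    fix \<epsilon> :: real assume "0 < \<epsilon>"
    show "\<exists>\<delta>>0. \<forall>x. forward_solution F x \<and> dist (x 0) e < \<delta> \<longrightarrow> (\<forall>t\<ge>0. dist (x t) e < \<epsilon>)"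
    proof (intro exI[of _ "min \<eta> (\<epsilon> / sqrt \<beta>)"] conjI allI impI)
      fix x and t :: real
      assume x: "forward_solution F x \<and> dist (x 0) e < min \<eta> (\<epsilon> / sqrt \<beta>)" and "0 \<le> t"
      have "sqrt \<beta> * dist (x 0) e * exp (- \<kappa> * t / 2) \<le> sqrt \<beta> * dist (x 0) e"
        using \<open>0 \<le> t\<close> assms(2,3) by (intro mult_left_le) auto
      also have "\<dots> < \<epsilon>"
        using x assms(2) by (simp add: field_simps)
      finally show "dist (x t) e < \<epsilon>"
        using estimate[of x t] x \<open>0 \<le> t\<close> by simp
    qed (use \<open>0 < \<eta>\<close> \<open>0 < \<epsilon>\<close> assms(2) in simp)
  qed
  moreover have "locally_attractive F e"
    unfolding locally_attractive_def
  proof (intro exI[of _ \<eta>] conjI allI impI)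
    fix x assume x: "forward_solution F x \<and> dist (x 0) e < \<eta>"
    have "((\<lambda>t. sqrt \<beta> * dist (x 0) e * exp (- \<kappa> * t / 2)) \<longlongrightarrow> 0) at_top"
      using assms(3) by real_asymp
    moreover have "\<forall>\<^sub>F t in at_top. norm (dist (x t) e) \<le> sqrt \<beta> * dist (x 0) e * exp (- \<kappa> * t / 2)"
      using eventually_ge_at_top[of 0] by eventually_elim (use estimate x in simp)
    ultimately show "(x \<longlongrightarrow> e) at_top"
      unfolding tendsto_dist_iff[of x e] by (rule Lim_null_comparison[rotated])
  qed (use \<open>0 < \<eta>\<close> in simp)
  ultimately show ?thesis
    using assms(1) unfolding locally_asymptotically_stable_def by simp
qed

lemma triangular_quadratic_form_bound:
  fixes u P q p m q0 p0 M \<beta> \<kappa> :: real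
  assumes "q \<le> - q0" "p \<le> - p0" "\<bar>m\<bar> \<le> M" "0 < q0" "0 < p0" "M^2 / (q0 * p0) \<le> \<beta>"
    and "\<kappa> \<le> q0" "\<kappa> \<le> p0"
  shows "2 * u * (u * q - m * P) + 2 * \<beta> * P * (p * P) \<le> - \<kappa> * (u^2 + \<beta> * P^2)"
proof -
  have "0 \<le> M^2 / (q0 * p0)"
    using assms(4,5) by simp
  then have "0 \<le> \<beta>"
    using assms(6) by linarith
  have "M^2 / q0 = M^2 / (q0 * p0) * p0"
    using assms(5) by simp
  also have "\<dots> \<le> \<beta> * p0"
    using assms(5,6) by (intro mult_right_mono) auto
  finally have "M^2 / q0 * P^2 \<le> \<beta> * p0 * P^2"
    by (rule mult_right_mono) simp
  moreover have "\<beta> * p0 * P^2 = p0 * (\<beta> * P^2)"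
    by simp
  \<comment> \<open>AM-GM absorbs the coupling term into the diagonal ones; this is what the bound on \<beta> is for.\<close>
  moreover have "2 * M * \<bar>u\<bar> * \<bar>P\<bar> \<le> q0 * u^2 + M^2 / q0 * P^2"
  proof -
    have "0 \<le> (q0 * \<bar>u\<bar> - M * \<bar>P\<bar>)^2 / q0"
      using assms(4) by simp
    also have "\<dots> = q0 * u^2 + M^2 / q0 * P^2 - 2 * M * \<bar>u\<bar> * \<bar>P\<bar>"
      using assms(4) by (simp add: power2_eq_square field_simps)
    finally show ?thesis by simp
  qed
  moreover have "- (u * m * P) \<le> M * \<bar>u\<bar> * \<bar>P\<bar>"
  proof -
    have "- (u * m * P) \<le> \<bar>u * m * P\<bar>"
      by linarith
    also have "\<dots> = \<bar>m\<bar> * (\<bar>u\<bar> * \<bar>P\<bar>)"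
      by (simp add: abs_mult)
    also have "\<dots> \<le> M * (\<bar>u\<bar> * \<bar>P\<bar>)"
      using assms(3) by (simp add: mult_right_mono)
    finally show ?thesis by (simp add: mult.assoc)
  qed
  moreover have "q * u^2 \<le> (- q0) * u^2"
    using assms(1) by (rule mult_right_mono) simp
  moreover have "p * (\<beta> * P^2) \<le> (- p0) * (\<beta> * P^2)"
    using assms(2) by (rule mult_right_mono) (simp add: \<open>0 \<le> \<beta>\<close>)
  moreover have "\<kappa> * u^2 \<le> q0 * u^2" "\<kappa> * (\<beta> * P^2) \<le> p0 * (\<beta> * P^2)"
    using assms(7,8) \<open>0 \<le> \<beta>\<close> by (simp_all add: mult_right_mono)
  moreover have "2 * u * (u * q - m * P) + 2 * \<beta> * P * (p * P)
      = 2 * (q * u^2) - 2 * (u * m * P) + 2 * (p * (\<beta> * P^2))"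
    by (simp add: power2_eq_square algebra_simps)
  moreover have "- \<kappa> * (u^2 + \<beta> * P^2) = - (\<kappa> * u^2) - \<kappa> * (\<beta> * P^2)"
    by (simp add: algebra_simps)
  ultimately show ?thesis
    by linarith
qed

lemma triangular_field_locally_asymptotically_stable:
  fixes F :: "real \<times> real \<Rightarrow> real \<times> real" and q p m :: "real \<Rightarrow> real"
  assumes field: "\<And>N P. \<bar>N - u\<bar> < d \<Longrightarrow> F (N, P) = ((N - u) * q N - m N * P, p N * P)"
    and "0 < d" "isCont q u" "isCont p u" "isCont m u" "q u < 0" "p u < 0"
  shows "locally_asymptotically_stable F (u, 0)"
proof -
  define q0 p0 M where "q0 = - q u / 2" and "p0 = - p u / 2" and "M = \<bar>m u\<bar> + 1"
  have "0 < q0" "0 < p0"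
    using assms(6,7) by (simp_all add: q0_def p0_def)
  have "\<forall>\<^sub>F N in nhds u. q N < - q0 \<and> p N < - p0 \<and> \<bar>m N\<bar> < M \<and> \<bar>N - u\<bar> < d"
  proof (intro eventually_conj)
    show "\<forall>\<^sub>F N in nhds u. q N < - q0" "\<forall>\<^sub>F N in nhds u. p N < - p0" "\<forall>\<^sub>F N in nhds u. \<bar>m N\<bar> < M"
      using assms(3-7) unfolding q0_def p0_def M_def isCont_def tendsto_at_iff_tendsto_nhds
      by (auto intro!: order_tendstoD tendsto_intros)
    show "\<forall>\<^sub>F N in nhds u. \<bar>N - u\<bar> < d"
      using \<open>0 < d\<close> by (auto simp: eventually_nhds_metric dist_real_def)
  qed
  then obtain \<rho> where "0 < \<rho>"
    and near: "\<And>N. \<bar>N - u\<bar> < \<rho> \<Longrightarrow> q N < - q0 \<and> p N < - p0 \<and> \<bar>m N\<bar> < M \<and> \<bar>N - u\<bar> < d"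
    unfolding eventually_nhds_metric dist_real_def by blast
  define \<beta> \<kappa> where "\<beta> = max 1 (M^2 / (q0 * p0))" and "\<kappa> = min q0 p0"
  have "1 \<le> \<beta>"
    by (simp add: \<beta>_def)
  show ?thesis
  proof (rule quad_lyapunov_locally_asymptotically_stable[of F "(u, 0)" \<beta> \<kappa> "\<rho>^2", OF _ \<open>1 \<le> \<beta>\<close>])
    show "equilibrium F (u, 0)"
      using field[of u 0] \<open>0 < d\<close> by (simp add: equilibrium_def zero_prod_def)
    show "0 < \<kappa>" "0 < \<rho>^2"
      using \<open>0 < q0\<close> \<open>0 < p0\<close> \<open>0 < \<rho>\<close> by (simp_all add: \<kappa>_def)
  next
    fix z :: "real \<times> real"
    obtain N P where z: "z = (N, P)" by fastforce
    assume "quad_lyapunov \<beta> (u, 0) z < \<rho>^2"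
    moreover have "0 \<le> \<beta> * P^2"
      using \<open>1 \<le> \<beta>\<close> by simp
    ultimately have "\<bar>N - u\<bar>^2 < \<rho>^2"
      unfolding z quad_lyapunov_def by simp
    then have "\<bar>N - u\<bar> < \<rho>"
      using \<open>0 < \<rho>\<close> by (simp add: power2_less_imp_less)
    then have bounds: "q N < - q0" "p N < - p0" "\<bar>m N\<bar> < M" and "F z = ((N - u) * q N - m N * P, p N * P)"
      using near field unfolding z by auto
    moreover have "2 * (N - u) * ((N - u) * q N - m N * P) + 2 * \<beta> * P * (p N * P)
        \<le> - \<kappa> * ((N - u)^2 + \<beta> * P^2)"
      by (rule triangular_quadratic_form_bound[of "q N" q0 "p N" p0 "m N" M \<beta> \<kappa>])
        (use bounds \<open>0 < q0\<close> \<open>0 < p0\<close> in \<open>auto simp: \<beta>_def \<kappa>_def\<close>)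
    ultimately show "2 * (fst z - fst (u, 0)) * fst (F z) + 2 * \<beta> * (snd z - snd (u, 0)) * snd (F z)
        \<le> - \<kappa> * quad_lyapunov \<beta> (u, 0) z"
      unfolding z quad_lyapunov_def by simp
  qed
qed

lemma time_map_strict_mono_on:
  fixes T G :: "real \<Rightarrow> real"
  assumes time_map: "\<And>N. lo < N \<Longrightarrow> N < hi \<Longrightarrow> 0 < G N \<and> (T has_real_derivative 1 / G N) (at N)"
  shows "strict_mono_on {lo<..<hi} T"
proof (rule strict_mono_onI)
  fix N N' assume N: "N \<in> {lo<..<hi}" "N' \<in> {lo<..<hi}" and "N < N'"
  show "T N < T N'"
  proof (rule DERIV_pos_imp_increasing[OF \<open>N < N'\<close>])
    fix z assume "N \<le> z" "z \<le> N'"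
    with N have "lo < z" "z < hi" by auto
    then show "\<exists>D. (T has_real_derivative D) (at z) \<and> 0 < D"
      using time_map[of z] by auto
  qed
qed

lemma time_map_inverse:
  fixes T G :: "real \<Rightarrow> real" and lo a hi y :: real
  defines "\<psi> \<equiv> inv_into {a<..<hi} T"
  assumes "lo < a" "a < hi"
    and time_map: "\<And>N. lo < N \<Longrightarrow> N < hi \<Longrightarrow> 0 < G N \<and> (T has_real_derivative 1 / G N) (at N)"
    and unbounded: "filterlim T at_top (at_left hi)"
    and "T a < y"
  shows "\<psi> y \<in> {a<..<hi}" and "T (\<psi> y) = y" and "(\<psi> has_real_derivative G (\<psi> y)) (at y)"
proof -
  have inj: "inj_on T {a<..<hi}"
    using strict_mono_on_imp_inj_on[OF time_map_strict_mono_on[OF time_map]]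
    by (rule inj_on_subset) (use \<open>lo < a\<close> in auto)
  have cont: "isCont T N" if "a \<le> N" "N < hi" for N
    using time_map[of N] that \<open>lo < a\<close> DERIV_isCont by force
  have onto: "z \<in> T ` {a<..<hi}" if "T a < z" for z
  proof -
    have "\<forall>\<^sub>F N in at_left hi. z \<le> T N"
      using unbounded by (simp add: filterlim_at_top)
    moreover have "\<forall>\<^sub>F N in at_left hi. N \<in> {a<..<hi}"
      using \<open>a < hi\<close> by (rule eventually_at_left_real)
    ultimately have "\<forall>\<^sub>F N in at_left hi. z \<le> T N \<and> N \<in> {a<..<hi}"
      by (rule eventually_conj)
    then obtain N' where "z \<le> T N'" "a < N'" "N' < hi"
      using eventually_happens'[OF trivial_limit_at_left_real] by auto
    moreover have "continuous_on {a..N'} T"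
      using cont \<open>N' < hi\<close> by (intro continuous_at_imp_continuous_on) auto
    ultimately obtain N where "a \<le> N" "N \<le> N'" "T N = z"
      using IVT'[of T a z N'] \<open>T a < z\<close> by auto
    with \<open>T a < z\<close> \<open>N' < hi\<close> show ?thesis
      by (cases "N = a") auto
  qed
  show "\<psi> y \<in> {a<..<hi}"
    unfolding \<psi>_def by (rule inv_into_into[OF onto[OF \<open>T a < y\<close>]])
  show "T (\<psi> y) = y"
    unfolding \<psi>_def by (rule f_inv_into_f[OF onto[OF \<open>T a < y\<close>]])
  from \<open>\<psi> y \<in> {a<..<hi}\<close> have "0 < G (\<psi> y)"
    and T': "(T has_real_derivative 1 / G (\<psi> y)) (at (\<psi> y))"
    using time_map[of "\<psi> y"] \<open>lo < a\<close> by auto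
  have "isCont \<psi> (T (\<psi> y))"
  proof (rule isCont_inverse_function2[where f = T and g = \<psi> and x = "\<psi> y"
        and a = "(a + \<psi> y) / 2" and b = "(\<psi> y + hi) / 2"])
    fix N assume "(a + \<psi> y) / 2 \<le> N" "N \<le> (\<psi> y + hi) / 2"
    with \<open>\<psi> y \<in> {a<..<hi}\<close> have "N \<in> {a<..<hi}" by auto
    then show "\<psi> (T N) = N"
      unfolding \<psi>_def using inj by auto
  next
    fix N assume "(a + \<psi> y) / 2 \<le> N" "N \<le> (\<psi> y + hi) / 2"
    with \<open>\<psi> y \<in> {a<..<hi}\<close> show "isCont T N"
      using cont by auto
  qed (use \<open>\<psi> y \<in> {a<..<hi}\<close> in auto)
  have "(\<psi> has_real_derivative inverse (1 / G (\<psi> y))) (at y)"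
  proof (rule DERIV_inverse_function[where f = T and g = \<psi> and a = "T a" and b = "y + 1"])
    show "T (\<psi> z) = z" if "T a < z" "z < y + 1" for z
      unfolding \<psi>_def using onto[OF that(1)] by (rule f_inv_into_f)
    show "isCont \<psi> y"
      using \<open>isCont \<psi> (T (\<psi> y))\<close> \<open>T (\<psi> y) = y\<close> by simp
  qed (use T' \<open>0 < G (\<psi> y)\<close> \<open>T a < y\<close> in auto)
  then show "(\<psi> has_real_derivative G (\<psi> y)) (at y)"
    by simp
qed

lemma time_map_solution:
  fixes T G :: "real \<Rightarrow> real" and lo hi N0 :: real
  assumes "lo < N0" "N0 < hi"
    and time_map: "\<And>N. lo < N \<Longrightarrow> N < hi \<Longrightarrow> 0 < G N \<and> (T has_real_derivative 1 / G N) (at N)"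
    and unbounded: "filterlim T at_top (at_left hi)"
  obtains \<phi> where "\<phi> 0 = N0"
    and "\<And>t. 0 \<le> t \<Longrightarrow> lo < \<phi> t \<and> \<phi> t < hi \<and> (\<phi> has_real_derivative G (\<phi> t)) (at t)"
    and "\<And>N. N0 \<le> N \<Longrightarrow> N < hi \<Longrightarrow> 0 \<le> T N - T N0 \<and> \<phi> (T N - T N0) = N"
proof -
  \<comment> \<open>Inverting T on (a, hi) with a < N0, not on (N0, hi), makes the solution differentiable at t = 0 too.\<close>
  define a where "a = (lo + N0) / 2"
  have "lo < a" "a < N0"
    using \<open>lo < N0\<close> by (simp_all add: a_def)
  define \<psi> where "\<psi> = inv_into {a<..<hi} T"
  have mono: "strict_mono_on {lo<..<hi} T"
    by (rule time_map_strict_mono_on[OF time_map])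
  have \<psi>_T: "\<psi> (T N) = N" if "a < N" "N < hi" for N
  proof -
    have "inj_on T {a<..<hi}"
      using strict_mono_on_imp_inj_on[OF mono] by (rule inj_on_subset) (use \<open>lo < a\<close> in auto)
    with that show ?thesis
      unfolding \<psi>_def by (simp add: inv_into_f_f)
  qed
  have "T a < T N0"
    using strict_mono_onD[OF mono] \<open>lo < a\<close> \<open>a < N0\<close> \<open>N0 < hi\<close> by simp
  show ?thesis
  proof (rule that[of "\<lambda>t. \<psi> (t + T N0)"])
    show "\<psi> (0 + T N0) = N0"
      using \<psi>_T \<open>a < N0\<close> \<open>N0 < hi\<close> by simp
  next
    fix t :: real assume "0 \<le> t"
    with \<open>T a < T N0\<close> have "T a < t + T N0" by simp
    note \<psi> = time_map_inverse[OF \<open>lo < a\<close> _ time_map unbounded this, folded \<psi>_def]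
    show "lo < \<psi> (t + T N0) \<and> \<psi> (t + T N0) < hi
        \<and> ((\<lambda>t. \<psi> (t + T N0)) has_real_derivative G (\<psi> (t + T N0))) (at t)"
      using \<psi> \<open>lo < a\<close> \<open>a < N0\<close> \<open>N0 < hi\<close> by (auto simp: DERIV_shift)
  next
    fix N assume "N0 \<le> N" "N < hi"
    then show "0 \<le> T N - T N0 \<and> \<psi> (T N - T N0 + T N0) = N"
      using strict_mono_on_leD[OF mono] \<psi>_T \<open>lo < N0\<close> \<open>a < N0\<close> by auto
  qed
qed

lemma axial_escape_not_lyapunov_stable:
  fixes F :: "real \<times> real \<Rightarrow> real \<times> real" and G T :: "real \<Rightarrow> real" and u hi :: real
  assumes "u < hi"
    and axis: "\<And>N. u < N \<Longrightarrow> N < hi \<Longrightarrow> F (N, 0) = (G N, 0)"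
    and time_map: "\<And>N. u < N \<Longrightarrow> N < hi \<Longrightarrow> 0 < G N \<and> (T has_real_derivative 1 / G N) (at N)"
    and unbounded: "filterlim T at_top (at_left hi)"
  shows "\<not> lyapunov_stable F (u, 0)"
proof
  define \<epsilon> where "\<epsilon> = (hi - u) / 2"
  have "0 < \<epsilon>"
    using \<open>u < hi\<close> by (simp add: \<epsilon>_def)
  assume "lyapunov_stable F (u, 0)"
  then obtain d where "0 < d"
    and stable: "\<And>x. forward_solution F x \<Longrightarrow> dist (x 0) (u, 0) < d \<Longrightarrow> \<forall>t\<ge>0. dist (x t) (u, 0) < \<epsilon>"
    unfolding lyapunov_stable_def using \<open>0 < \<epsilon>\<close> by blast
  define N0 where "N0 = u + min d \<epsilon> / 2"
  have "0 < min d \<epsilon>" "min d \<epsilon> \<le> d" "min d \<epsilon> \<le> \<epsilon>"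
    using \<open>0 < d\<close> \<open>0 < \<epsilon>\<close> by auto
  then have "u < N0" "N0 < hi" "N0 - u < d" "N0 \<le> u + \<epsilon>"
    using \<epsilon>_def unfolding N0_def by auto
  obtain \<phi> where "\<phi> 0 = N0"
    and \<phi>: "\<And>t. 0 \<le> t \<Longrightarrow> u < \<phi> t \<and> \<phi> t < hi \<and> (\<phi> has_real_derivative G (\<phi> t)) (at t)"
    and reach: "\<And>N. N0 \<le> N \<Longrightarrow> N < hi \<Longrightarrow> 0 \<le> T N - T N0 \<and> \<phi> (T N - T N0) = N"
    using time_map_solution[OF \<open>u < N0\<close> \<open>N0 < hi\<close> time_map unbounded] by blast
  define x where "x t = (\<phi> t, 0 :: real)" for t
  have "forward_solution F x"
    unfolding forward_solution_def
  proof (intro allI impI)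
    fix t :: real assume "0 \<le> t"
    then have "(\<phi> has_vector_derivative G (\<phi> t)) (at t within {0..})"
      using \<phi>[of t] by (simp add: has_real_derivative_iff_has_vector_derivative[symmetric] has_field_derivative_at_within)
    then have "(x has_vector_derivative (G (\<phi> t), 0)) (at t within {0..})"
      unfolding x_def by (intro has_vector_derivative_Pair) (auto intro: has_vector_derivative_const)
    then show "(x has_vector_derivative F (x t)) (at t within {0..})"
      using axis \<phi>[OF \<open>0 \<le> t\<close>] by (simp add: x_def)
  qed
  moreover have "dist (x 0) (u, 0) < d"
    using \<open>\<phi> 0 = N0\<close> \<open>u < N0\<close> \<open>N0 - u < d\<close> by (simp add: x_def dist_Pair_Pair dist_real_def)
  ultimately have far: "\<forall>t\<ge>0. dist (x t) (u, 0) < \<epsilon>"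
    by (rule stable)
  have "u + \<epsilon> < hi"
    using \<open>u < hi\<close> by (simp add: \<epsilon>_def field_simps)
  with reach[of "u + \<epsilon>"] \<open>N0 \<le> u + \<epsilon>\<close>
  obtain t where "0 \<le> t" "\<phi> t = u + \<epsilon>"
    by blast
  with far have "dist (u + \<epsilon>, 0) (u, 0 :: real) < \<epsilon>"
    by (auto simp: x_def)
  then show False
    using \<open>0 < \<epsilon>\<close> by (simp add: dist_Pair_Pair dist_real_def)
qed

lemma allee_time_map_partial_fractions:
  fixes r K w N N1 N2 :: real
  assumes "N \<noteq> 0" "N1 \<noteq> N" "N \<noteq> N2" "N1 \<noteq> N2" "N1 \<noteq> 0" "N2 \<noteq> 0" "r \<noteq> 0" "K \<noteq> 0" "w + N \<noteq> 0"
  shows "1 / (r * N * (N1 - N) * (N - N2) / (K * (w + N)))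
    = - K * w / (r * N1 * N2) / N + K * (w + N1) / (r * N1 * (N1 - N2)) / (N1 - N)
      + K * (w + N2) / (r * N2 * (N1 - N2)) / (N - N2)"
proof -
  obtain p q z s where pqzs: "p = N1 - N" "q = N - N2" "z = N1 - N2" "s = w + N"
    by blast
  then have nonzero: "p \<noteq> 0" "q \<noteq> 0" "z \<noteq> 0" "s \<noteq> 0"
    using assms by auto
  have shifts: "N1 = N + p" "N2 = N - q" "z = p + q" "w = s - N"
    using pqzs by auto
  have "- K * w / (r * N1 * N2) / N + K * (w + N1) / (r * N1 * z) / p
      + K * (w + N2) / (r * N2 * z) / q = K * s / (r * N * p * q)"
    using nonzero assms by (simp add: field_simps) (use shifts in algebra)
  then show ?thesis
    using pqzs by simp
qed

lemma allee_roots: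
  fixes K h w :: real
  defines "N1 \<equiv> ((K - w) + sqrt ((K - w)^2 - 4 * K * (h - w))) / 2"
    and "N2 \<equiv> ((K - w) - sqrt ((K - w)^2 - 4 * K * (h - w))) / 2"
  assumes "0 < K" "w < K" "w < h" "h < (K + w)^2 / (4 * K)"
  shows "N1 + N2 = K - w" and "N1 * N2 = K * (h - w)" and "0 < N2" and "N2 < N1"
proof -
  define D where "D = (K - w)^2 - 4 * K * (h - w)"
  have "h * (4 * K) < (K + w)^2"
    using assms(3,6) by (simp add: pos_less_divide_eq)
  then have "0 < D"
    unfolding D_def by (simp add: power2_eq_square algebra_simps)
  then have "0 < sqrt D" "(sqrt D)^2 = D"
    by simp_all
  have N1: "N1 = ((K - w) + sqrt D) / 2" and N2: "N2 = ((K - w) - sqrt D) / 2"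
    unfolding N1_def N2_def D_def by simp_all
  show sum: "N1 + N2 = K - w"
    unfolding N1 N2 by (simp add: field_simps)
  have "N1 * N2 = ((K - w)^2 - (sqrt D)^2) / 4"
    unfolding N1 N2 by (simp add: field_simps power2_eq_square)
  then show prod: "N1 * N2 = K * (h - w)"
    using \<open>(sqrt D)^2 = D\<close> by (simp add: D_def)
  show "N2 < N1"
    unfolding N1 N2 using \<open>0 < sqrt D\<close> by simp
  show "0 < N2"
  proof (rule ccontr)
    assume "\<not> 0 < N2"
    moreover have "0 \<le> N1"
      using sum \<open>\<not> 0 < N2\<close> assms(4) by linarith
    ultimately have "N1 * N2 \<le> 0"
      by (simp add: mult_nonneg_nonpos)
    moreover have "0 < K * (h - w)"
      using assms(3,5) by simp
    ultimately show False
      using prod by linarith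
  qed
qed

lemma pp_field_non_hyperbolic_double_root:
  fixes r K h w a b c \<delta> :: real
  assumes "0 < K" "0 < w" "w < K" "h = (K + w)^2 / (4 * K)"
  shows "non_hyperbolic (pp_field r K h w a b c \<delta>) ((K - w) / 2, 0)"
proof -
  define N3 where "N3 = (K - w) / 2"
  have double_root: "N3 + N3 = K - w" "N3 * N3 = K * (h - w)"
    using assms(1,4) by (simp_all add: N3_def field_simps power2_eq_square)
  have "w + N3 = (K + w) / 2"
    by (simp add: N3_def field_simps)
  then have "K \<noteq> 0" "w + N3 \<noteq> 0"
    using assms(1,2) by simp_all
  note root = double_root this
  have "jac11 (pp_field r K h w a b c \<delta>) (N3, 0) = 0"
    using jac11_pp_field_root[OF root] by simp
  then have "jac_eigenvalue (pp_field r K h w a b c \<delta>) (N3, 0) 0"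
    by (simp add: jac_eigenvalue_triangular_iff jac21_pp_field_axis)
  then show ?thesis
    unfolding non_hyperbolic_def N3_def[symmetric] using equilibrium_pp_field_root[OF root] by auto
qed

lemma pp_field_saddle_smaller_root:
  fixes r K h w a b c \<delta> N1 N2 :: real
  assumes "0 < r" "0 < K" "0 < w" "0 < b"
    and "N1 + N2 = K - w" "N1 * N2 = K * (h - w)" "0 < N2" "N2 < N1"
    and "c < \<delta> * (b + N2^2) / N2"
  shows "saddle (pp_field r K h w a b c \<delta>) (N2, 0)"
proof -
  have root: "N2 + N1 = K - w" "N2 * N1 = K * (h - w)" "K \<noteq> 0" "w + N2 \<noteq> 0"
    using assms(2,3,5-7) by (simp_all add: ac_simps)
  show ?thesis
  proof (rule saddle_triangularI)
    show "equilibrium (pp_field r K h w a b c \<delta>) (N2, 0)"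
      by (rule equilibrium_pp_field_root[OF root])
    show "jac21 (pp_field r K h w a b c \<delta>) (N2, 0) = 0"
      by (rule jac21_pp_field_axis)
    show "jac22 (pp_field r K h w a b c \<delta>) (N2, 0) < 0"
      using predator_growth_rate_neg[OF assms(7,4,9)] by (simp add: jac22_pp_field_axis)
    show "0 < jac11 (pp_field r K h w a b c \<delta>) (N2, 0)"
      using assms(1-3,7,8) by (simp add: jac11_pp_field_root[OF root])
  qed
qed

lemma pp_field_unstable_smaller_root:
  fixes r K h w a b c \<delta> N1 N2 :: real
  assumes "0 < r" "0 < K" "0 < w"
    and "N1 + N2 = K - w" "N1 * N2 = K * (h - w)" "0 < N2" "N2 < N1"
  shows "unstable (pp_field r K h w a b c \<delta>) (N2, 0)"
proof -
  define G where "G N = r * N * (N1 - N) * (N - N2) / (K * (w + N))" for N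
  define A B C where "A = - K * w / (r * N1 * N2)" and "B = K * (w + N1) / (r * N1 * (N1 - N2))"
    and "C = K * (w + N2) / (r * N2 * (N1 - N2))"
  \<comment> \<open>A primitive of 1 / G by partial fractions; the term - B ln (N1 - N) makes it diverge at N1.\<close>
  define T where "T N = A * ln N - B * ln (N1 - N) + C * ln (N - N2)" for N
  have "\<not> lyapunov_stable (pp_field r K h w a b c \<delta>) (N2, 0)"
  proof (rule axial_escape_not_lyapunov_stable[where G = G and T = T])
    fix N assume N: "N2 < N" "N < N1"
    then have "w + N \<noteq> 0"
      using assms(3,6) by simp
    then show "pp_field r K h w a b c \<delta> (N, 0) = (G N, 0)"
      using allee_growth_factor[OF assms(4,5)] assms(2) by (simp add: pp_field_Pair G_def)
    have "(T has_real_derivative A / N + B / (N1 - N) + C / (N - N2)) (at N)"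
      unfolding T_def using N assms(6) by (auto intro!: derivative_eq_intros simp: divide_inverse)
    moreover have "A / N + B / (N1 - N) + C / (N - N2) = 1 / G N"
      unfolding A_def B_def C_def G_def using N assms
      by (intro allee_time_map_partial_fractions[symmetric]) auto
    moreover have "0 < G N"
      unfolding G_def using N assms by (intro divide_pos_pos mult_pos_pos) auto
    ultimately show "0 < G N \<and> (T has_real_derivative 1 / G N) (at N)"
      by simp
  next
    have "0 < B"
      unfolding B_def using assms by (intro divide_pos_pos mult_pos_pos) auto
    then show "filterlim T at_top (at_left N1)"
      unfolding T_def filterlim_at_left_to_right filterlim_at_right_to_0[of _ _ "- N1"]
      using assms(6,7) by real_asymp
  qed (use assms(7) in simp)
  moreover have "equilibrium (pp_field r K h w a b c \<delta>) (N2, 0)"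
    using assms(2-7) by (intro equilibrium_pp_field_root[of N2 N1]) (simp_all add: ac_simps)
  ultimately show ?thesis
    by (simp add: unstable_def)
qed

lemma pp_field_locally_asymptotically_stable_larger_root:
  fixes r K h w a b c \<delta> N1 N2 :: real
  assumes "0 < r" "0 < K" "0 < w" "0 < b"
    and "N1 + N2 = K - w" "N1 * N2 = K * (h - w)" "0 < N2" "N2 < N1"
    and "c < \<delta> * (b + N1^2) / N1"
  shows "locally_asymptotically_stable (pp_field r K h w a b c \<delta>) (N1, 0)"
proof (rule triangular_field_locally_asymptotically_stable)
  fix N P :: real assume "\<bar>N - N1\<bar> < w + N1"
  then have "w + N \<noteq> 0" by linarith
  then have "r * N * (1 - N / K - h / (w + N)) = r * N * ((N1 - N) * (N - N2) / (K * (w + N)))"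
    using assms(2) by (simp add: allee_growth_factor[OF assms(5,6)])
  also have "\<dots> = (N - N1) * (- r * N * (N - N2) / (K * (w + N)))"
    by (simp add: algebra_simps)
  finally show "pp_field r K h w a b c \<delta> (N, P)
      = ((N - N1) * (- r * N * (N - N2) / (K * (w + N))) - a * N / (b + N^2) * P,
         (c * N / (b + N^2) - \<delta>) * P)"
    by (simp add: pp_field_Pair left_diff_distrib)
next
  have "0 < b + N^2" for N :: real
    using assms(4) by (simp add: add_pos_nonneg)
  then show "isCont (\<lambda>N. - r * N * (N - N2) / (K * (w + N))) N1"
    and "isCont (\<lambda>N. c * N / (b + N^2) - \<delta>) N1" and "isCont (\<lambda>N. a * N / (b + N^2)) N1"
    using assms by (auto intro!: continuous_intros simp: less_imp_neq[symmetric])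
  show "- r * N1 * (N1 - N2) / (K * (w + N1)) < 0"
    using assms by (simp add: divide_neg_pos)
  show "c * N1 / (b + N1^2) - \<delta> < 0"
    using assms by (intro predator_growth_rate_neg) auto
qed (use assms in simp)

theorem theorem6:
  fixes r K h w a b c \<delta> :: real
  defines "F \<equiv> pp_field r K h w a b c \<delta>"
    and "N1 \<equiv> ((K - w) + sqrt ((K - w)^2 - 4 * K * (h - w))) / 2"
    and "N2 \<equiv> ((K - w) - sqrt ((K - w)^2 - 4 * K * (h - w))) / 2"
    and "N3 \<equiv> (K - w) / 2"
  assumes pos: "r > 0" "K > 0" "h > 0" "w > 0" "a > 0" "b > 0" "c > 0" "\<delta> > 0"
    and Kw: "K > w"
    and strong: "h > w"
  shows "(h = (K + w)^2 / (4 * K) \<and> c < \<delta> * (b + N3^2) / N3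
            \<longrightarrow> non_hyperbolic F (N3, 0))
       \<and> (h < (K + w)^2 / (4 * K) \<and> c < \<delta> * (b + N1^2) / N1 \<and> c < \<delta> * (b + N2^2) / N2
            \<longrightarrow> locally_asymptotically_stable F (N1, 0) \<and> unstable F (N2, 0) \<and> saddle F (N2, 0))"
proof (intro conjI impI)
  assume "h = (K + w)^2 / (4 * K) \<and> c < \<delta> * (b + N3^2) / N3"
  then show "non_hyperbolic F (N3, 0)"
    unfolding F_def N3_def using pos Kw by (intro pp_field_non_hyperbolic_double_root) auto
next
  assume H: "h < (K + w)^2 / (4 * K) \<and> c < \<delta> * (b + N1^2) / N1 \<and> c < \<delta> * (b + N2^2) / N2"
  note roots = allee_roots[OF pos(2) Kw strong, folded N1_def N2_def, OF conjunct1[OF H]]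
  show "locally_asymptotically_stable F (N1, 0)"
    unfolding F_def using pp_field_locally_asymptotically_stable_larger_root[OF pos(1,2,4,6) roots] H by blast
  show "unstable F (N2, 0)"
    unfolding F_def using pp_field_unstable_smaller_root[OF pos(1,2,4) roots] .
  show "saddle F (N2, 0)"
    unfolding F_def using pp_field_saddle_smaller_root[OF pos(1,2,4,6) roots] H by blast
qed

end
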